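(* Let $f\in C^1$ and suppose that for every $a\in\mathbb R$ the initial value problem $v_{xx}+f(x,v,v_x)=0$, $v(0)=a$, $v_x(0)=0$ has a solution $v(\cdot,a)$ on $[0,1]$. Let $v_j,v_k$ be two solutions of the Neumann problem $v_{xx}+f(x,v,v_x)=0$, $v_x(0)=v_x(1)=0$, with $a_j:=v_j(0)<a_k:=v_k(0)$. Set $w(x):=(v_k(x)-v_j(x))/(a_k-a_j)$, and let $\vartheta:[0,1]\to\mathbb R$ be the continuous function with $\vartheta(0)=0$ such that $w=\rho\cos\vartheta$, $w_x=-\rho\sin\vartheta$ for some $\rho>0$ (clockwise Prüfer angle; $(w,w_x)$ never vanishes since $w$ is a nontrivial solution of a linear second order ODE with $w(0)=1$, $w_x(0)=0$). Then $\vartheta(1)/\pi$ is an integer and $$z(v_k-v_j)=\vartheta(1)/\pi,$$ where $z(\varphi)$ denotes the number of strict sign changes of $\varphi$ on $[0,1]$. *)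

theory Defs
  imports "HOL-Analysis.Analysis" "HOL-Library.Extended_Nat"
begin

definition C1_fun :: "(real \<times> real \<times> real \<Rightarrow> real) \<Rightarrow> bool" where
  "C1_fun f \<longleftrightarrow> (\<exists>f'. (\<forall>z. (f has_derivative blinfun_apply (f' z)) (at z)) \<and> continuous_on UNIV f')"

definition solves_ode :: "(real \<times> real \<times> real \<Rightarrow> real) \<Rightarrow> (real \<Rightarrow> real) \<Rightarrow> (real \<Rightarrow> real) \<Rightarrow> bool" where
  "solves_ode f v v' \<longleftrightarrow>
     (\<forall>x\<in>{0..1}. (v has_real_derivative v' x) (at x within {0..1}) \<and>
                 (v' has_real_derivative (- f (x, v x, v' x))) (at x within {0..1}))"

definition sign_changes :: "(real \<Rightarrow> real) \<Rightarrow> enat" where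
  "sign_changes \<phi> = Sup {enat k | k. \<exists>xs :: nat \<Rightarrow> real.
      (\<forall>i\<le>k. 0 \<le> xs i \<and> xs i \<le> 1) \<and>
      (\<forall>i<k. xs i < xs (Suc i) \<and> \<phi> (xs i) * \<phi> (xs (Suc i)) < 0)}"

end

theory Submission
  imports Defs
begin

text \<open>
  Where \<open>cos \<theta>\<close> vanishes we have \<open>w = 0\<close> and
  \<open>w' \<noteq> 0\<close>, so \<open>w\<close> times the constant \<open>w'(x)\<close> has the positive derivative \<open>w'(x)\<^sup>2\<close> at \<open>x\<close>:
  the angle crosses every level \<open>\<pi>/2 + j\<pi>\<close> strictly upward, hence never returns below it.
  So the index \<open>round (\<theta>/\<pi>)\<close> is nondecreasing, and \<open>cos \<theta>\<close>, which has the sign of \<open>w\<close>,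
  cannot change sign while the index stays constant. As \<open>w'(1) = 0\<close>, \<open>\<theta>(1) = n\<pi>\<close>; along any
  chain of sign changes the index increases at each step, giving at most \<open>n\<close> of them, and
  the points where \<open>\<theta> = i\<pi>\<close> (\<open>i = 0..n\<close>) realise \<open>n\<close>.

  Only the polar representation, \<open>\<theta>(0) = 0\<close> and \<open>w'(1) = 0\<close> are used; the hypotheses on \<open>f\<close>
  and the initial value problems serve in the paper only to produce the representation.
\<close>

lemma sgn_sin_eq_sgn:
  fixes t :: real
  assumes "\<bar>t\<bar> < pi"
  shows "sgn (sin t) = sgn t"
proof -
  consider "0 < t" | "t < 0" | "t = 0" by linarith
  then show ?thesis
  proof cases
    case 1
    then show ?thesis using assms sin_gt_zero[of t] by simp
  next
    case 2
    then show ?thesis using assms sin_gt_zero[of "- t"] by simp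
  qed simp
qed

definition crosses_upward :: "(real \<Rightarrow> real) \<Rightarrow> real \<Rightarrow> bool" where
  "crosses_upward g t \<longleftrightarrow> (\<forall>\<^sub>F s in at t. sgn (g s - g t) = sgn (s - t))"

lemma crosses_upwardD:
  assumes "crosses_upward g t"
  shows "\<forall>\<^sub>F s in at_right t. g t < g s" and "\<forall>\<^sub>F s in at_left t. g s < g t"
proof -
  have "\<forall>\<^sub>F s in at_right t. sgn (g s - g t) = sgn (s - t)"
    and "\<forall>\<^sub>F s in at_left t. sgn (g s - g t) = sgn (s - t)"
    using assms by (simp_all add: crosses_upward_def eventually_at_split)
  then show "\<forall>\<^sub>F s in at_right t. g t < g s" and "\<forall>\<^sub>F s in at_left t. g s < g t"
    using eventually_at_right_less[of t] eventually_at_filter[of "\<lambda>s. s < t" t "{..<t}"]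
    by (auto elim: eventually_elim2 simp: sgn_if split: if_splits)
qed

lemma has_real_derivative_pos_imp_crosses_upward:
  assumes "(g has_real_derivative l) (at t)" and "0 < l"
  shows "crosses_upward g t"
proof -
  have "((\<lambda>s. (g s - g t) / (s - t)) \<longlongrightarrow> l) (at t)"
    using assms(1) by (simp add: has_field_derivative_iff)
  then have "\<forall>\<^sub>F s in at t. 0 < (g s - g t) / (s - t)"
    using assms(2) by (rule order_tendstoD)
  then show ?thesis
    unfolding crosses_upward_def
    by eventually_elim (auto simp: zero_less_divide_iff)
qed

lemma prufer_angle_crosses_upward:
  fixes \<theta> \<rho> w :: "real \<Rightarrow> real"
  assumes deriv: "(w has_real_derivative - \<rho> x * sin (\<theta> x)) (at x)"
    and cont: "isCont \<theta> x"
    and polar: "\<forall>\<^sub>F y in nhds x. 0 < \<rho> y \<and> w y = \<rho> y * cos (\<theta> y)"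
    and zero: "cos (\<theta> x) = 0"
  shows "crosses_upward \<theta> x"
proof -
  have sin_sq: "(sin (\<theta> x))\<^sup>2 = 1"
    using sin_cos_squared_add[of "\<theta> x"] zero by simp
  have \<rho>x: "0 < \<rho> x"
    using eventually_nhds_x_imp_x[OF polar] by simp
  define g where "g y = w y * (- \<rho> x * sin (\<theta> x))" for y
  have g_x: "g x = 0"
    using eventually_nhds_x_imp_x[OF polar] zero by (simp add: g_def)
  have "(g has_real_derivative (\<rho> x)\<^sup>2) (at x)"
    using DERIV_cmult_right[OF deriv, of "- \<rho> x * sin (\<theta> x)"] sin_sq
    unfolding g_def by (simp add: power2_eq_square algebra_simps)
  then have "crosses_upward g x"
    by (rule has_real_derivative_pos_imp_crosses_upward) (use \<rho>x in simp)
  moreover have "\<forall>\<^sub>F y in at x. dist (\<theta> y) (\<theta> x) < pi"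
    using cont unfolding isCont_def by (rule tendstoD) simp
  moreover have "\<forall>\<^sub>F y in at x. 0 < \<rho> y \<and> w y = \<rho> y * cos (\<theta> y)"
    using polar by (simp add: eventually_nhds_conv_at)
  ultimately show ?thesis
    unfolding crosses_upward_def g_x
  proof eventually_elim
    case (elim y)
    \<comment> \<open>\<open>sin (\<theta> x) = \<plusminus>1\<close> turns \<open>g\<close> into the sine of the angle increment.\<close>
    have "cos (\<theta> y) = - sin (\<theta> y - \<theta> x) * sin (\<theta> x)"
      using cos_add[of "\<theta> y - \<theta> x" "\<theta> x"] zero by simp
    then have "g y = \<rho> y * \<rho> x * sin (\<theta> y - \<theta> x)"
      using elim sin_sq by (simp add: g_def power2_eq_square algebra_simps)
    then show ?case
      using elim \<rho>x sgn_sin_eq_sgn[of "\<theta> y - \<theta> x"]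
      by (simp add: sgn_mult dist_real_def)
  qed
qed

lemma crosses_upward_stays_above:
  fixes g :: "real \<Rightarrow> real"
  assumes cont: "continuous_on {a..b} g"
    and upcross: "\<And>t. t \<in> {a..b} \<Longrightarrow> g t = c \<Longrightarrow> crosses_upward g t"
    and x: "a \<le> x" "g x = c" and y: "x < y" "y \<le> b"
  shows "c < g y"
proof (rule ccontr)
  assume "\<not> c < g y"
  obtain e where "x < e" and e: "\<And>s. x < s \<Longrightarrow> s < e \<Longrightarrow> c < g s"
    using crosses_upwardD(1)[OF upcross[of x]] x y unfolding eventually_at_right_field by auto
  define p where "p = (x + min e y) / 2"
  have p: "x < p" "p < y" "c < g p"
    using \<open>x < e\<close> y e[of p] by (auto simp: p_def)
  define Z where "Z = {p..y} \<inter> g -` {..c}"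
  have cont_py: "continuous_on {p..y} g"
    using cont x p y by (auto intro: continuous_on_subset)
  have "Inf Z \<in> Z"
  proof (rule closed_contains_Inf)
    have "y \<in> Z" using \<open>\<not> c < g y\<close> p by (simp add: Z_def)
    then show "Z \<noteq> {}" by blast
    show "bdd_below Z" by (auto simp: Z_def)
    show "closed Z"
      unfolding Z_def by (rule continuous_closed_preimage[OF cont_py]) auto
  qed
  then have t: "p < Inf Z" "Inf Z \<le> y" "g (Inf Z) \<le> c"
    using p by (auto simp: Z_def order.order_iff_strict)
  \<comment> \<open>\<open>Inf Z\<close> is the first point after \<open>p\<close> where \<open>g\<close> comes down to level \<open>c\<close>,
      but \<open>g\<close> can only reach a level from below.\<close>
  have "continuous_on {p..Inf Z} g"
    by (rule continuous_on_subset[OF cont_py]) (use t in auto)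
  then obtain r where r: "p \<le> r" "r \<le> Inf Z" "g r = c"
    using IVT2'[of g "Inf Z" c p] t p by auto
  have "r \<in> Z" using r t by (auto simp: Z_def)
  then have "g (Inf Z) = c"
    using r cInf_lower[of r Z] by (fastforce simp: Z_def)
  then obtain e' where "e' < Inf Z" and e': "\<And>s. e' < s \<Longrightarrow> s < Inf Z \<Longrightarrow> g s < c"
    using crosses_upwardD(2)[OF upcross[of "Inf Z"]] t x y p
    unfolding eventually_at_left_field by auto
  define q where "q = (max p e' + Inf Z) / 2"
  have q: "p < q" "e' < q" "q < Inf Z"
    using \<open>e' < Inf Z\<close> t(1) by (auto simp: q_def max_def)
  then have "q \<in> Z"
    using e'[of q] t by (auto simp: Z_def)
  then have "Inf Z \<le> q"
    by (rule cInf_lower) (simp add: Z_def)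
  with q show False by simp
qed

lemma round_div_pi_bounds:
  fixes t :: real
  shows "of_int (round (t / pi)) * pi - pi / 2 \<le> t" and "t < of_int (round (t / pi)) * pi + pi / 2"
proof -
  have "of_int (round (t / pi)) - 1/2 \<le> t / pi" and "t / pi < of_int (round (t / pi)) + 1/2"
    using of_int_round_le[of "t / pi"] of_int_round_gt[of "t / pi"] by linarith+
  then have "(of_int (round (t / pi)) - 1/2) * pi \<le> t" and "t < (of_int (round (t / pi)) + 1/2) * pi"
    by (simp_all add: pos_le_divide_eq pos_divide_less_eq)
  then show "of_int (round (t / pi)) * pi - pi / 2 \<le> t" and "t < of_int (round (t / pi)) * pi + pi / 2"
    by (simp_all add: algebra_simps)
qed

lemma mono_on_round_div_pi_if_crosses_upward:
  fixes g :: "real \<Rightarrow> real"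
  assumes cont: "continuous_on {a..b} g"
    and upcross: "\<And>t. t \<in> {a..b} \<Longrightarrow> cos (g t) = 0 \<Longrightarrow> crosses_upward g t"
  shows "mono_on {a..b} (\<lambda>x. round (g x / pi))"
proof (rule mono_onI, rule ccontr)
  fix x y
  assume "x \<in> {a..b}" "y \<in> {a..b}" "x \<le> y"
  then have xy: "a \<le> x" "x \<le> y" "y \<le> b" by auto
  assume "\<not> round (g x / pi) \<le> round (g y / pi)"
  then have "of_int (round (g y / pi) + 1) * pi \<le> of_int (round (g x / pi)) * pi"
    by (intro mult_right_mono) simp_all
  \<comment> \<open>\<open>g\<close> has to come down through the level \<open>c\<close>, where \<open>cos\<close> vanishes.\<close>
  moreover define c where "c = of_int (round (g x / pi)) * pi - pi / 2"
  ultimately have below: "g y < c" and above: "c \<le> g x"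
    using round_div_pi_bounds[of "g y"] round_div_pi_bounds[of "g x"]
    by (simp_all add: c_def algebra_simps)
  have cos_c: "cos c = 0"
    by (simp add: c_def cos_diff sin_zero_iff_int2)
  have "continuous_on {x..y} g"
    by (rule continuous_on_subset[OF cont]) (use xy in auto)
  then obtain t where t: "x \<le> t" "t \<le> y" "g t = c"
    using IVT2'[of g y c x] below above xy by auto
  have "c < g y"
  proof (rule crosses_upward_stays_above[OF cont _ _ t(3)])
    show "crosses_upward g t'" if "t' \<in> {a..b}" "g t' = c" for t'
      using upcross[OF that(1)] that cos_c by simp
    show "a \<le> t" "y \<le> b" using t xy by auto
    show "t < y" using t below by (cases "t = y") auto
  qed
  with below show False by simp
qed

lemma cos_mult_nonneg_if_round_div_pi_eq:
  fixes s t :: real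
  assumes "round (s / pi) = round (t / pi)"
  shows "0 \<le> cos s * cos t"
proof -
  define k where "k = of_int (round (t / pi)) * pi"
  have split: "cos u = cos (u - k) * cos k" and nonneg: "0 \<le> cos (u - k)"
    if "round (u / pi) = round (t / pi)" for u
  proof -
    show "cos u = cos (u - k) * cos k"
      using cos_add[of "u - k" k] by (simp add: k_def sin_zero_iff_int2)
    show "0 \<le> cos (u - k)"
      using round_div_pi_bounds[of u] that by (intro cos_ge_zero) (simp_all add: k_def)
  qed
  have "cos s * cos t = cos (s - k) * cos (t - k) * (cos k)\<^sup>2"
    using split[OF assms] split[OF refl] by (simp add: power2_eq_square)
  also have "\<dots> \<ge> 0"
    using nonneg[OF assms] nonneg[OF refl] by simp
  finally show ?thesis .
qed

definition sign_alternating :: "(real \<Rightarrow> real) \<Rightarrow> nat \<Rightarrow> (nat \<Rightarrow> real) \<Rightarrow> bool" where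
  "sign_alternating \<phi> k xs \<longleftrightarrow> (\<forall>i\<le>k. xs i \<in> {0..1}) \<and>
     (\<forall>i<k. xs i < xs (Suc i) \<and> \<phi> (xs i) * \<phi> (xs (Suc i)) < 0)"

lemma sign_changes_altdef: "sign_changes \<phi> = Sup {enat k | k. \<exists>xs. sign_alternating \<phi> k xs}"
  by (simp add: sign_changes_def sign_alternating_def)

lemma sign_changes_eqI:
  assumes "\<And>k xs. sign_alternating \<phi> k xs \<Longrightarrow> k \<le> n" and "\<exists>xs. sign_alternating \<phi> n xs"
  shows "sign_changes \<phi> = enat n"
  unfolding sign_changes_altdef
  by (rule antisym) (use assms in \<open>auto intro!: Sup_least Sup_upper\<close>)

lemma sign_changes_cong_sgn:
  assumes "\<And>x. x \<in> {0..1} \<Longrightarrow> sgn (\<phi> x) = sgn (\<psi> x)"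
  shows "sign_changes \<phi> = sign_changes \<psi>"
proof -
  have "\<phi> a * \<phi> b < 0 \<longleftrightarrow> \<psi> a * \<psi> b < 0" if "a \<in> {0..1}" "b \<in> {0..1}" for a b
    using assms[OF that(1)] assms[OF that(2)] by (metis sgn_less sgn_mult)
  then have "sign_alternating \<phi> = sign_alternating \<psi>"
    unfolding sign_alternating_def by (intro ext) (meson Suc_leI less_imp_le)
  then show ?thesis
    unfolding sign_changes_altdef by simp
qed

lemma sign_alternating_cos_length_le:
  fixes \<theta> :: "real \<Rightarrow> real" and n :: nat
  assumes mono: "mono_on {0..1} (\<lambda>x. round (\<theta> x / pi))"
    and \<theta>0: "\<theta> 0 = 0" and \<theta>1: "\<theta> 1 = n * pi"
    and alt: "sign_alternating (\<lambda>x. cos (\<theta> x)) k xs"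
  shows "k \<le> n"
proof -
  define r where "r i = round (\<theta> (xs i) / pi)" for i
  have xs01: "xs i \<in> {0..1}" if "i \<le> k" for i
    using alt that by (simp add: sign_alternating_def)
  have step: "r i < r (Suc i)" if "i < k" for i
  proof -
    have "xs i \<le> xs (Suc i)"
      using alt that by (simp add: sign_alternating_def less_imp_le)
    then have "r i \<le> r (Suc i)"
      using mono_onD[OF mono, of "xs i" "xs (Suc i)"] xs01[of i] xs01[of "Suc i"] that
      by (simp add: r_def)
    moreover have "r i \<noteq> r (Suc i)"
      using alt that cos_mult_nonneg_if_round_div_pi_eq[of "\<theta> (xs i)" "\<theta> (xs (Suc i))"]
      by (auto simp: r_def sign_alternating_def)
    ultimately show ?thesis by simp
  qed
  have "r 0 + int i \<le> r i" if "i \<le> k" for i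
    using that
  proof (induction i)
    case (Suc i)
    then show ?case using step[of i] by simp
  qed simp
  moreover have "0 \<le> r 0" and "r k \<le> n"
    using mono_onD[OF mono, of 0 "xs 0"] mono_onD[OF mono, of "xs k" 1] xs01[of 0] xs01[of k]
    by (simp_all add: r_def \<theta>0 \<theta>1)
  ultimately show "k \<le> n" by fastforce
qed

lemma ex_sign_alternating_cos:
  fixes \<theta> :: "real \<Rightarrow> real" and n :: nat
  assumes cont: "continuous_on {0..1} \<theta>"
    and mono: "mono_on {0..1} (\<lambda>x. round (\<theta> x / pi))"
    and \<theta>0: "\<theta> 0 = 0" and \<theta>1: "\<theta> 1 = n * pi"
  shows "\<exists>xs. sign_alternating (\<lambda>x. cos (\<theta> x)) n xs"
proof -
  have "\<exists>s. s \<in> {0..1} \<and> \<theta> s = i * pi" if "i \<le> n" for i :: nat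
    using IVT'[of \<theta> 0 "i * pi" 1] cont that \<theta>0 \<theta>1 by (auto intro: mult_right_mono)
  then obtain s where s: "\<And>i. i \<le> n \<Longrightarrow> s i \<in> {0..1} \<and> \<theta> (s i) = i * pi"
    by metis
  have "s i < s (Suc i)" if "i < n" for i
  proof (rule ccontr)
    assume "\<not> s i < s (Suc i)"
    then have "round (\<theta> (s (Suc i)) / pi) \<le> round (\<theta> (s i) / pi)"
      using mono_onD[OF mono, of "s (Suc i)" "s i"] s[of i] s[of "Suc i"] that by auto
    then show False
      using s[of i] s[of "Suc i"] that by (simp del: of_nat_Suc)
  qed
  moreover have "cos (\<theta> (s i)) * cos (\<theta> (s (Suc i))) < 0" if "i < n" for i
    using s[of i] s[of "Suc i"] that by (simp del: of_nat_Suc)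
  ultimately have "sign_alternating (\<lambda>x. cos (\<theta> x)) n s"
    using s by (simp add: sign_alternating_def)
  then show ?thesis by blast
qed

lemma sign_changes_prufer_angle:
  fixes \<theta> \<rho> w w' :: "real \<Rightarrow> real"
  assumes cont: "continuous_on {0..1} \<theta>"
    and polar: "\<And>x. x \<in> {0..1} \<Longrightarrow>
      0 < \<rho> x \<and> w x = \<rho> x * cos (\<theta> x) \<and> w' x = - \<rho> x * sin (\<theta> x)"
    and deriv: "\<And>x. x \<in> {0..1} \<Longrightarrow> (w has_real_derivative w' x) (at x within {0..1})"
    and \<theta>0: "\<theta> 0 = 0" and w'1: "w' 1 = 0"
  shows "\<exists>n::nat. \<theta> 1 = n * pi \<and> sign_changes w = n"
proof -
  have sin1: "sin (\<theta> 1) = 0"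
    using polar[of 1] w'1 by auto
  have upcross: "crosses_upward \<theta> t" if t: "t \<in> {0..1}" "cos (\<theta> t) = 0" for t
  proof -
    have "t \<noteq> 0" using t \<theta>0 by auto
    moreover have "t \<noteq> 1" using t sin1 sin_cos_squared_add[of "\<theta> 1"] by auto
    ultimately have int: "t \<in> interior {0..1}" using t by auto
    show ?thesis
    proof (rule prufer_angle_crosses_upward[where w = w and \<rho> = \<rho>])
      show "(w has_real_derivative - \<rho> t * sin (\<theta> t)) (at t)"
        using deriv[OF t(1)] polar[OF t(1)] at_within_interior[OF int] by simp
      show "isCont \<theta> t"
        using continuous_on_interior[OF cont int] .
      have "\<forall>\<^sub>F y in nhds t. y \<in> {0<..<1}"
        using int by (intro eventually_nhds_in_open) auto
      then show "\<forall>\<^sub>F y in nhds t. 0 < \<rho> y \<and> w y = \<rho> y * cos (\<theta> y)"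
        by eventually_elim (use polar in auto)
    qed (fact t(2))
  qed
  have mono: "mono_on {0..1} (\<lambda>x. round (\<theta> x / pi))"
    using mono_on_round_div_pi_if_crosses_upward[OF cont upcross] .
  obtain m :: int where m: "\<theta> 1 = m * pi"
    using sin1 by (auto simp: sin_zero_iff_int2)
  have "0 \<le> m"
    using mono_onD[OF mono, of 0 1] by (simp add: m \<theta>0)
  then have \<theta>1: "\<theta> 1 = nat m * pi"
    by (simp add: m)
  have "sign_changes w = sign_changes (\<lambda>x. cos (\<theta> x))"
    using polar by (intro sign_changes_cong_sgn) (simp add: sgn_mult)
  also have "\<dots> = nat m"
    using sign_alternating_cos_length_le[OF mono \<theta>0 \<theta>1] ex_sign_alternating_cos[OF cont mono \<theta>0 \<theta>1]
    by (rule sign_changes_eqI)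
  finally show ?thesis
    using \<theta>1 by blast
qed

theorem lemma5p1:
  fixes f :: "real \<times> real \<times> real \<Rightarrow> real"
    and vj vj' vk vk' \<theta> \<rho> :: "real \<Rightarrow> real"
  assumes C1: "C1_fun f"
    and IVP: "\<forall>a. \<exists>v v'. solves_ode f v v' \<and> v 0 = a \<and> v' 0 = 0"
    and sol_j: "solves_ode f vj vj'" "vj' 0 = 0" "vj' 1 = 0"
    and sol_k: "solves_ode f vk vk'" "vk' 0 = 0" "vk' 1 = 0"
    and less: "vj 0 < vk 0"
    and theta_cont: "continuous_on {0..1} \<theta>"
    and theta0: "\<theta> 0 = 0"
    and polar: "\<forall>x\<in>{0..1}. \<rho> x > 0 \<and>
        (vk x - vj x) / (vk 0 - vj 0) = \<rho> x * cos (\<theta> x) \<and>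
        (vk' x - vj' x) / (vk 0 - vj 0) = - \<rho> x * sin (\<theta> x)"
  shows "\<exists>n::nat. \<theta> 1 / pi = real n \<and> sign_changes (\<lambda>x. vk x - vj x) = enat n"
proof -
  define a where "a = vk 0 - vj 0"
  have "0 < a" using less by (simp add: a_def)
  have deriv: "((\<lambda>x. (vk x - vj x) / a) has_real_derivative (vk' x - vj' x) / a) (at x within {0..1})"
    if "x \<in> {0..1}" for x
    using sol_j(1) sol_k(1) that unfolding solves_ode_def
    by (intro DERIV_cdivide DERIV_diff) auto
  have polar': "0 < \<rho> x \<and> (vk x - vj x) / a = \<rho> x * cos (\<theta> x) \<and>
      (vk' x - vj' x) / a = - \<rho> x * sin (\<theta> x)" if "x \<in> {0..1}" for x
    using polar that by (simp add: a_def)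
  have "(vk' 1 - vj' 1) / a = 0"
    using sol_j(3) sol_k(3) by simp
  then obtain n :: nat where "\<theta> 1 = n * pi" and "sign_changes (\<lambda>x. (vk x - vj x) / a) = n"
    using sign_changes_prufer_angle[OF theta_cont polar' deriv theta0] by blast
  moreover have "sign_changes (\<lambda>x. vk x - vj x) = sign_changes (\<lambda>x. (vk x - vj x) / a)"
    using \<open>0 < a\<close> by (intro sign_changes_cong_sgn) (simp add: sgn_divide)
  ultimately show ?thesis
    by (intro exI[of _ n]) simp
qed

end
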